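(* Let $S=\{v_1,\ldots,v_n\}\subset\mathbb Z^n$ be an orthogonal subset with $|V_\alpha|\ge2$ for all $\alpha$. Let $i\in\mathcal P_2$ with $E_i=\{s,t\}$ and $|\langle v_s,e_i\rangle|=|\langle v_t,e_i\rangle|=1$. Then, up to a change of basis of $\mathbb Z^n$ and negation of $v_s$ or $v_t$, $v_s=e_i+e_j$ and $v_t=e_i-e_j$ for some $j\in\mathcal P_2$.
   Context: $\mathbb Z^n$ carries the standard dot product with standard basis $e_1,\ldots,e_n$. $S$ is orthogonal if $\langle v_\alpha,v_\alpha\rangle\ge1$ for all $\alpha$ and $\langle v_\alpha,v_\beta\rangle=0$ for $\alpha\ne\beta$. $V_\alpha=\{j:\langle v_\alpha,e_j\rangle\ne0\}$, $E_j=\{\alpha:\langle v_\alpha,e_j\rangle\ne0\}$, $\mathcal P_2=\{j:|E_j|=2\}$. A change of basis of $\mathbb Z^n$ means replacing the standard basis by another orthonormal basis (a signed permutation of coordinates). *)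

theory Defs
  imports Main
begin

text \<open>Vectors of Z^n are functions nat => int, only coordinates 1..n are relevant.
  A family S = {v_1,...,v_n} is a function v :: nat => nat => int, with v alpha the
  vector v_alpha (alpha in 1..n), and v alpha j = <v_alpha, e_j>.\<close>

definition dotp :: "nat \<Rightarrow> (nat \<Rightarrow> int) \<Rightarrow> (nat \<Rightarrow> int) \<Rightarrow> int" where
  "dotp n x y = (\<Sum>j\<in>{1..n}. x j * y j)"

definition unitv :: "nat \<Rightarrow> nat \<Rightarrow> int" where
  "unitv i = (\<lambda>j. if j = i then 1 else 0)"

definition orthogonal_family :: "nat \<Rightarrow> (nat \<Rightarrow> nat \<Rightarrow> int) \<Rightarrow> bool" where
  "orthogonal_family n v \<longleftrightarrow>
     (\<forall>\<alpha>\<in>{1..n}. dotp n (v \<alpha>) (v \<alpha>) \<ge> 1) \<and>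
     (\<forall>\<alpha>\<in>{1..n}. \<forall>\<beta>\<in>{1..n}. \<alpha> \<noteq> \<beta> \<longrightarrow> dotp n (v \<alpha>) (v \<beta>) = 0)"

definition Vsupp :: "nat \<Rightarrow> (nat \<Rightarrow> nat \<Rightarrow> int) \<Rightarrow> nat \<Rightarrow> nat set" where
  "Vsupp n v \<alpha> = {j\<in>{1..n}. dotp n (v \<alpha>) (unitv j) \<noteq> 0}"

definition Eset :: "nat \<Rightarrow> (nat \<Rightarrow> nat \<Rightarrow> int) \<Rightarrow> nat \<Rightarrow> nat set" where
  "Eset n v j = {\<alpha>\<in>{1..n}. dotp n (v \<alpha>) (unitv j) \<noteq> 0}"

definition P2 :: "nat \<Rightarrow> (nat \<Rightarrow> nat \<Rightarrow> int) \<Rightarrow> nat set" where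
  "P2 n v = {j\<in>{1..n}. card (Eset n v j) = 2}"

text \<open>Change of basis: new orthonormal basis f_k = eps k * e_(pi k), with pi a permutation
  of {1..n} and eps k = +-1. The new coordinate vector of x is k |-> <x, f_k>.\<close>

definition signed_perm :: "nat \<Rightarrow> (nat \<Rightarrow> nat) \<Rightarrow> (nat \<Rightarrow> int) \<Rightarrow> bool" where
  "signed_perm n \<pi> \<epsilon> \<longleftrightarrow> bij_betw \<pi> {1..n} {1..n} \<and> (\<forall>k\<in>{1..n}. \<epsilon> k \<in> {1, -1})"

definition change_basis :: "(nat \<Rightarrow> nat) \<Rightarrow> (nat \<Rightarrow> int) \<Rightarrow> (nat \<Rightarrow> int) \<Rightarrow> (nat \<Rightarrow> int)" where
  "change_basis \<pi> \<epsilon> x = (\<lambda>k. \<epsilon> k * x (\<pi> k))"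

end

theory Submission
  imports Defs "Jordan_Normal_Form.Determinant"
begin

text \<open>
  If v_1, ..., v_n are pairwise orthogonal nonzero vectors in \<int>^n, the matrix whose columns
  are v_\<alpha> / |v_\<alpha>|^2 is a right inverse of the matrix whose rows are v_\<alpha>; being square,
  it is also a left inverse, which yields the column relations
  \<Sum>_\<alpha> v_\<alpha>(k) v_\<alpha>(l) / |v_\<alpha>|^2 = \<delta>_kl.
  For the column i, supported on {s, t} with entries \<plusminus>1, this reads
  1/|v_s|^2 + 1/|v_t|^2 = 1, so |v_s|^2 = |v_t|^2 = 2 and v_s = \<plusminus>e_i \<plusminus> e_j.
  Orthogonality to v_s and |v_t|^2 = 2 then determine v_t up to sign, and the column
  relation for j shows that no other vector meets e_j. Flipping the sign of e_j gives the
  normal form.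
\<close>

lemma orthogonal_rows_imp_orthogonal_columns:
  fixes w :: "nat \<Rightarrow> nat \<Rightarrow> 'a::field" and N :: "nat \<Rightarrow> 'a"
  assumes rows: "\<And>a b. a < n \<Longrightarrow> b < n \<Longrightarrow>
      (\<Sum>k<n. w a k * w b k) = (if a = b then N a else 0)"
    and N_nonzero: "\<And>a. a < n \<Longrightarrow> N a \<noteq> 0"
    and "k < n" "l < n"
  shows "(\<Sum>a<n. w a k * w a l / N a) = (if k = l then 1 else 0)"
proof -
  define A where "A = mat n n (\<lambda>(a, k). w a k)"
  define B where "B = mat n n (\<lambda>(k, a). w a k / N a)"
  have A: "A \<in> carrier_mat n n" and B: "B \<in> carrier_mat n n"
    unfolding A_def B_def by auto
  have "A * B = 1\<^sub>m n"
  proof (rule eq_matI)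
    fix a b assume ab: "a < dim_row (1\<^sub>m n :: 'a mat)" "b < dim_col (1\<^sub>m n :: 'a mat)"
    then have "(A * B) $$ (a, b) = (\<Sum>k<n. w a k * w b k) / N b"
      by (auto simp: A_def B_def scalar_prod_def lessThan_atLeast0 sum_divide_distrib)
    also have "\<dots> = 1\<^sub>m n $$ (a, b)"
      using ab rows[of a b] N_nonzero[of b] by auto
    finally show "(A * B) $$ (a, b) = 1\<^sub>m n $$ (a, b)" .
  qed (auto simp: A_def B_def)
  then have "B * A = 1\<^sub>m n"
    using mat_mult_left_right_inverse[OF A B] by simp
  moreover have "(B * A) $$ (k, l) = (\<Sum>a<n. w a k * w a l / N a)"
    using assms(3,4) by (auto simp: A_def B_def scalar_prod_def lessThan_atLeast0 intro: sum.cong)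
  ultimately show ?thesis
    using assms(3,4) by simp
qed

lemma orthogonal_family_columns:
  assumes orth: "orthogonal_family n v" and "k \<in> {1..n}" "l \<in> {1..n}"
  shows "(\<Sum>\<alpha>\<in>{1..n}. of_int (v \<alpha> k * v \<alpha> l) / of_int (dotp n (v \<alpha>) (v \<alpha>)) :: 'a::field_char_0)
    = (if k = l then 1 else 0)"
proof -
  define w :: "nat \<Rightarrow> nat \<Rightarrow> 'a" where "w a j = of_int (v (Suc a) (Suc j))" for a j
  define N :: "nat \<Rightarrow> 'a" where "N a = of_int (dotp n (v (Suc a)) (v (Suc a)))" for a
  have "(\<Sum>j<n. w a j * w b j) = (if a = b then N a else 0)" if "a < n" "b < n" for a b
  proof -
    have "(\<Sum>j<n. w a j * w b j) = of_int (dotp n (v (Suc a)) (v (Suc b)))"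
      by (simp add: w_def dotp_def sum.atLeast1_atMost_eq)
    then show ?thesis
      using orth that by (simp add: orthogonal_family_def N_def)
  qed
  moreover have "N a \<noteq> 0" if "a < n" for a
  proof -
    have "dotp n (v (Suc a)) (v (Suc a)) \<ge> 1"
      using orth that by (simp add: orthogonal_family_def)
    then show ?thesis
      by (simp add: N_def)
  qed
  ultimately have "(\<Sum>a<n. w a (k - 1) * w a (l - 1) / N a) = (if k - 1 = l - 1 then 1 else 0)"
    by (rule orthogonal_rows_imp_orthogonal_columns) (use assms(2,3) in auto)
  moreover have "k - 1 = l - 1 \<longleftrightarrow> k = l"
    using assms(2,3) by auto
  ultimately show ?thesis
    using assms(2,3) by (simp add: sum.atLeast1_atMost_eq w_def N_def)
qed

lemma dotp_unitv: "j \<in> {1..n} \<Longrightarrow> dotp n x (unitv j) = x j"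
  by (simp add: dotp_def unitv_def if_distrib cong: if_cong)

lemma unit_fractions_sum_1:
  fixes a b :: int
  assumes "a \<ge> 1" "b \<ge> 1" and "1 / of_int a + 1 / of_int b = (1 :: 'a::field_char_0)"
  shows "a = 2" "b = 2"
proof -
  have "of_int (a + b) = (of_int (a * b) :: 'a)"
    using assms by (simp add: field_simps)
  then have "(a - 1) * (b - 1) = 1"
    unfolding of_int_eq_iff by (simp add: algebra_simps)
  then show "a = 2" "b = 2"
    using assms(1,2) by (auto simp: zmult_eq_1_iff)
qed

lemma sum_squares_eq_1_imp_unit:
  fixes x :: "'b \<Rightarrow> int"
  assumes "finite A" and sum: "(\<Sum>k\<in>A. x k * x k) = 1"
  obtains j where "j \<in> A" "x j * x j = 1" "\<And>k. k \<in> A \<Longrightarrow> k \<noteq> j \<Longrightarrow> x k = 0"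
proof -
  have "\<exists>j\<in>A. x j \<noteq> 0"
  proof (rule ccontr)
    assume "\<not> (\<exists>j\<in>A. x j \<noteq> 0)"
    then have "(\<Sum>k\<in>A. x k * x k) = 0"
      by simp
    with sum show False
      by simp
  qed
  then obtain j where j: "j \<in> A" "x j \<noteq> 0" ..
  have "x j * x j \<ge> 1"
    using j(2) by (auto simp: int_one_le_iff_zero_less zero_less_mult_iff)
  moreover have "x j * x j + (\<Sum>k\<in>A - {j}. x k * x k) = 1"
    using assms j(1) by (simp add: sum.remove)
  moreover have "(\<Sum>k\<in>A - {j}. x k * x k) \<ge> 0"
    by (simp add: sum_nonneg)
  ultimately have "x j * x j = 1" "(\<Sum>k\<in>A - {j}. x k * x k) = 0"
    by linarith+
  with assms(1) j(1) show thesis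
    by (intro that) (auto simp: sum_nonneg_eq_0_iff)
qed

lemma sqnorm_2_with_unit_coord:
  assumes "dotp n x x = 2" "i \<in> {1..n}" "x i * x i = 1"
  obtains j where "j \<in> {1..n}" "j \<noteq> i" "x j * x j = 1"
    "\<And>k. k \<in> {1..n} \<Longrightarrow> k \<noteq> i \<Longrightarrow> k \<noteq> j \<Longrightarrow> x k = 0"
proof -
  have rest: "(\<Sum>k\<in>{1..n} - {i}. x k * x k) = 1"
    using assms by (simp add: dotp_def sum.remove)
  obtain j where "j \<in> {1..n} - {i}" "x j * x j = 1"
    "\<And>k. k \<in> {1..n} - {i} \<Longrightarrow> k \<noteq> j \<Longrightarrow> x k = 0"
    using sum_squares_eq_1_imp_unit[OF _ rest] by auto
  then show thesis
    by (intro that) auto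
qed

lemma orthogonal_to_sqnorm_2_pair:
  assumes xy: "dotp n x y = 0" and y_norm: "dotp n y y = 2"
    and ij: "i \<in> {1..n}" "j \<in> {1..n}" "i \<noteq> j"
    and x_units: "x i * x i = 1" "x j * x j = 1"
    and x_supp: "\<And>k. k \<in> {1..n} \<Longrightarrow> k \<noteq> i \<Longrightarrow> k \<noteq> j \<Longrightarrow> x k = 0"
    and y_i: "y i * y i = 1"
  shows "y j = - (x i * y i * x j)" "y j * y j = 1"
    "\<And>k. k \<in> {1..n} \<Longrightarrow> k \<noteq> i \<Longrightarrow> k \<noteq> j \<Longrightarrow> y k = 0"
proof -
  have "dotp n x y = (\<Sum>k\<in>{i, j}. x k * y k)"
    unfolding dotp_def by (rule sum.mono_neutral_right) (use ij x_supp in auto)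
  with xy ij(3) have "x j * (x i * y i + x j * y j) = 0"
    by simp
  then have "x i * y i * x j + (x j * x j) * y j = 0"
    by (simp add: algebra_simps)
  with x_units(2) show y_j: "y j = - (x i * y i * x j)"
    by simp
  have "y j * y j = (x i * x i) * (y i * y i) * (x j * x j)"
    by (simp add: y_j algebra_simps)
  with x_units y_i show y_j_unit: "y j * y j = 1"
    by simp
  obtain j' where "j' \<noteq> i" "y j' * y j' = 1"
    and y_supp: "\<And>k. k \<in> {1..n} \<Longrightarrow> k \<noteq> i \<Longrightarrow> k \<noteq> j' \<Longrightarrow> y k = 0"
    using sqnorm_2_with_unit_coord[OF y_norm ij(1) y_i] by blast
  have "j' = j"
    using y_supp[OF ij(2) ij(3)[symmetric]] y_j_unit by fastforce
  with y_supp show "\<And>k. k \<in> {1..n} \<Longrightarrow> k \<noteq> i \<Longrightarrow> k \<noteq> j \<Longrightarrow> y k = 0"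
    by blast
qed

lemma orthogonal_family_unit_column_sqnorms:
  assumes orth: "orthogonal_family n v" and i: "i \<in> {1..n}"
    and Ei: "Eset n v i = {s, t}" and "s \<noteq> t"
    and units: "v s i * v s i = 1" "v t i * v t i = 1"
  shows "dotp n (v s) (v s) = 2" "dotp n (v t) (v t) = 2"
proof -
  have st: "s \<in> {1..n}" "t \<in> {1..n}"
    using Ei by (auto simp: Eset_def)
  have off: "v \<alpha> i = 0" if "\<alpha> \<in> {1..n} - {s, t}" for \<alpha>
  proof -
    have "\<alpha> \<notin> Eset n v i"
      using Ei that by simp
    with that show ?thesis
      by (simp add: Eset_def dotp_unitv[OF i])
  qed
  have "(1 :: rat) = (\<Sum>\<alpha>\<in>{1..n}. of_int (v \<alpha> i * v \<alpha> i) / of_int (dotp n (v \<alpha>) (v \<alpha>)))"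
    using orthogonal_family_columns[OF orth i i] by simp
  also have "\<dots> = (\<Sum>\<alpha>\<in>{s, t}. of_int (v \<alpha> i * v \<alpha> i) / of_int (dotp n (v \<alpha>) (v \<alpha>)))"
    by (rule sum.mono_neutral_right) (use st off in auto)
  also have "\<dots> = 1 / of_int (dotp n (v s) (v s)) + 1 / of_int (dotp n (v t) (v t))"
    using \<open>s \<noteq> t\<close> units by (simp del: of_int_mult)
  finally have "1 / of_int (dotp n (v s) (v s)) + 1 / of_int (dotp n (v t) (v t)) = (1 :: rat)" ..
  moreover have "dotp n (v s) (v s) \<ge> 1" "dotp n (v t) (v t) \<ge> 1"
    using orth st by (auto simp: orthogonal_family_def)
  ultimately show "dotp n (v s) (v s) = 2" "dotp n (v t) (v t) = 2"
    using unit_fractions_sum_1 by blast+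
qed

lemma orthogonal_family_Eset_of_sqnorm_2_pair:
  assumes orth: "orthogonal_family n v" and j: "j \<in> {1..n}"
    and st: "s \<in> {1..n}" "t \<in> {1..n}" "s \<noteq> t"
    and norms: "dotp n (v s) (v s) = 2" "dotp n (v t) (v t) = 2"
    and units: "v s j * v s j = 1" "v t j * v t j = 1"
  shows "Eset n v j = {s, t}"
proof -
  define f :: "nat \<Rightarrow> rat"
    where "f \<alpha> = of_int (v \<alpha> j * v \<alpha> j) / of_int (dotp n (v \<alpha>) (v \<alpha>))" for \<alpha>
  have "sum f {1..n} = 1"
    using orthogonal_family_columns[OF orth j j] by (simp add: f_def)
  moreover have "sum f {1..n} = sum f ({1..n} - {s, t}) + sum f {s, t}"
    by (rule sum.subset_diff) (use st in auto)
  moreover have "sum f {s, t} = 1"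
    using st(3) norms units by (simp add: f_def del: of_int_mult)
  ultimately have rest: "sum f ({1..n} - {s, t}) = 0"
    by simp
  have pos: "dotp n (v \<alpha>) (v \<alpha>) \<ge> 1" if "\<alpha> \<in> {1..n}" for \<alpha>
    using orth that by (simp add: orthogonal_family_def)
  have "f \<alpha> \<ge> 0" if "\<alpha> \<in> {1..n}" for \<alpha>
    using pos[OF that] by (simp add: f_def divide_nonneg_nonneg)
  with rest have "f \<alpha> = 0" if "\<alpha> \<in> {1..n} - {s, t}" for \<alpha>
    using that sum_nonneg_eq_0_iff[of "{1..n} - {s, t}" f] by auto
  with pos have "v \<alpha> j = 0" if "\<alpha> \<in> {1..n} - {s, t}" for \<alpha>
    using that by (fastforce simp: f_def)
  with st units show ?thesis
    by (auto simp: Eset_def dotp_unitv[OF j])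
qed

lemma signed_perm_apply:
  assumes "signed_perm n \<pi> \<epsilon>" "j \<in> {1..n}"
  shows "\<pi> j \<in> {1..n}" "\<epsilon> j \<noteq> 0"
  using assms bij_betw_apply unfolding signed_perm_def by fastforce+

lemma Eset_change_basis:
  assumes "signed_perm n \<pi> \<epsilon>" "j \<in> {1..n}"
  shows "Eset n (\<lambda>\<alpha>. change_basis \<pi> \<epsilon> (v \<alpha>)) j = Eset n v (\<pi> j)"
  using signed_perm_apply[OF assms] assms(2)
  by (simp add: Eset_def dotp_unitv change_basis_def)

lemma P2_change_basis:
  assumes "signed_perm n \<pi> \<epsilon>" "j \<in> {1..n}"
  shows "j \<in> P2 n (\<lambda>\<alpha>. change_basis \<pi> \<epsilon> (v \<alpha>)) \<longleftrightarrow> \<pi> j \<in> P2 n v"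
  using signed_perm_apply[OF assms] assms
  by (simp add: P2_def Eset_change_basis)

lemma sign_change_to_standard_pair:
  assumes ij: "i \<noteq> j"
    and units: "x i * x i = 1" "x j * x j = 1" "y i * y i = 1"
    and y_j: "y j = - (x i * y i * x j)"
    and x_supp: "\<And>k. k \<in> {1..n} \<Longrightarrow> k \<noteq> i \<Longrightarrow> k \<noteq> j \<Longrightarrow> x k = 0"
    and y_supp: "\<And>k. k \<in> {1..n} \<Longrightarrow> k \<noteq> i \<Longrightarrow> k \<noteq> j \<Longrightarrow> y k = 0"
  obtains \<epsilon> where "signed_perm n id \<epsilon>"
    "\<forall>k\<in>{1..n}. x i * change_basis id \<epsilon> x k = unitv i k + unitv j k"
    "\<forall>k\<in>{1..n}. y i * change_basis id \<epsilon> y k = unitv i k - unitv j k"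
proof
  define \<epsilon> where "\<epsilon> k = (if k = j then x i * x j else 1)" for k
  have signs: "x i \<in> {1, -1}" "x j \<in> {1, -1}" "y i \<in> {1, -1}"
    using units by (auto simp: zmult_eq_1_iff)
  then show "signed_perm n id \<epsilon>"
    by (auto simp: signed_perm_def \<epsilon>_def)
  show "\<forall>k\<in>{1..n}. x i * change_basis id \<epsilon> x k = unitv i k + unitv j k"
    "\<forall>k\<in>{1..n}. y i * change_basis id \<epsilon> y k = unitv i k - unitv j k"
    using signs ij x_supp y_supp y_j by (auto simp: \<epsilon>_def change_basis_def unitv_def)
qed

theorem lemma4p2:
  fixes n :: nat and v :: "nat \<Rightarrow> nat \<Rightarrow> int" and i s t :: nat
  assumes orth: "orthogonal_family n v"
    and supp: "\<forall>\<alpha>\<in>{1..n}. card (Vsupp n v \<alpha>) \<ge> 2"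
    and iP2: "i \<in> P2 n v"
    and Ei: "Eset n v i = {s, t}"
    and vs: "\<bar>dotp n (v s) (unitv i)\<bar> = 1"
    and vt: "\<bar>dotp n (v t) (unitv i)\<bar> = 1"
  shows "\<exists>\<pi> \<epsilon> a b j. signed_perm n \<pi> \<epsilon> \<and> a \<in> {1, -1} \<and> b \<in> {1, -1} \<and>
           j \<in> P2 n (\<lambda>\<alpha>. change_basis \<pi> \<epsilon> (v \<alpha>)) \<and>
           (\<forall>k\<in>{1..n}. a * change_basis \<pi> \<epsilon> (v s) k = unitv i k + unitv j k) \<and>
           (\<forall>k\<in>{1..n}. b * change_basis \<pi> \<epsilon> (v t) k = unitv i k - unitv j k)"
proof -
  have i: "i \<in> {1..n}" and "s \<noteq> t"
    using iP2 Ei by (auto simp: P2_def)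
  have st: "s \<in> {1..n}" "t \<in> {1..n}"
    using Ei by (auto simp: Eset_def)
  have signs: "v s i \<in> {1, -1}" "v t i \<in> {1, -1}"
    using vs vt by (auto simp: dotp_unitv[OF i] abs_if split: if_splits)
  then have units_i: "v s i * v s i = 1" "v t i * v t i = 1"
    by auto
  note norms = orthogonal_family_unit_column_sqnorms[OF orth i Ei \<open>s \<noteq> t\<close> units_i]
  obtain j where j: "j \<in> {1..n}" "j \<noteq> i" "v s j * v s j = 1"
    and vs_supp: "\<And>k. k \<in> {1..n} \<Longrightarrow> k \<noteq> i \<Longrightarrow> k \<noteq> j \<Longrightarrow> v s k = 0"
    using sqnorm_2_with_unit_coord[OF norms(1) i units_i(1)] by blast
  have "dotp n (v s) (v t) = 0"
    using orth st \<open>s \<noteq> t\<close> by (simp add: orthogonal_family_def)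
  note vt_shape = orthogonal_to_sqnorm_2_pair[OF this norms(2) i j(1) j(2)[symmetric]
      units_i(1) j(3) vs_supp units_i(2)]
  have "j \<in> P2 n v"
    using orthogonal_family_Eset_of_sqnorm_2_pair[OF orth j(1) st \<open>s \<noteq> t\<close> norms j(3) vt_shape(2)]
      j(1) \<open>s \<noteq> t\<close> by (simp add: P2_def)
  obtain \<epsilon> where \<epsilon>: "signed_perm n id \<epsilon>"
    "\<forall>k\<in>{1..n}. v s i * change_basis id \<epsilon> (v s) k = unitv i k + unitv j k"
    "\<forall>k\<in>{1..n}. v t i * change_basis id \<epsilon> (v t) k = unitv i k - unitv j k"
    using sign_change_to_standard_pair[OF j(2)[symmetric] units_i(1) j(3) units_i(2) vt_shape(1)
        vs_supp vt_shape(3)] by blast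
  moreover have "j \<in> P2 n (\<lambda>\<alpha>. change_basis id \<epsilon> (v \<alpha>))"
    using P2_change_basis[OF \<epsilon>(1) j(1)] \<open>j \<in> P2 n v\<close> by simp
  ultimately show ?thesis
    using signs by blast
qed

end
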